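(* Let $\mathcal{T}$ be a finite or countably infinite set, let $\prec$ be a strict total order on $\mathcal{T}$, and let $\mathbf{p} \ne \mathbf{q}$ be two probability distributions on $\mathcal{T}$. For a positive integer $m$, let $X_0 \sim \mathbf{q}$, $X_1,\dots,X_m \sim^{\mathrm{iid}} \mathbf{p}$, $U_0,\dots,U_m \sim^{\mathrm{iid}} \mathrm{Uniform}(0,1)$ be mutually independent, and let $R = \sum_{j=1}^m \big(\mathbb{I}[X_j \prec X_0] + \mathbb{I}[X_j = X_0, U_j < U_0]\big)$. Then there is some $M \ge 1$ such that, for $m = M$, $R$ is not uniformly distributed on $\{0,1,\dots,M\}$.
   Context: $\mathbb{I}[\cdot]$ denotes the indicator of an event; $R$ depends on $m$. *)

theory Defs
  imports "HOL-Probability.Probability"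
begin

definition rank_space :: "'a pmf \<Rightarrow> 'a pmf \<Rightarrow> nat \<Rightarrow> ('a \<times> (nat \<Rightarrow> 'a) \<times> (nat \<Rightarrow> real)) measure" where
  "rank_space p q m =
     measure_pmf q \<Otimes>\<^sub>M
       (PiM {1..m} (\<lambda>_. measure_pmf p) \<Otimes>\<^sub>M
        PiM {0..m} (\<lambda>_. uniform_measure lborel {0<..<1::real}))"

definition rank_stat :: "('a \<Rightarrow> 'a \<Rightarrow> bool) \<Rightarrow> nat \<Rightarrow> 'a \<times> (nat \<Rightarrow> 'a) \<times> (nat \<Rightarrow> real) \<Rightarrow> nat" where
  "rank_stat lt m \<omega> = (case \<omega> of (x0, xs, us) \<Rightarrow>
     (\<Sum>j=1..m. of_bool (lt (xs j) x0) + of_bool (xs j = x0 \<and> us j < us 0)))"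

end

theory Submission
  imports Defs
begin

(*
  Let a be the p-mass strictly below X_0 and c = p(X_0). The event R = m says that every (X_j, U_j)
  ranks below (X_0, U_0); given X_0 and U_0 this has probability V^m, where V = a + c U_0 is the
  randomized distribution function of p evaluated at X_0. If R were uniform for every m, then
  P(R = m) = 1/(m + 1) would give V the moments of the uniform distribution on [0, 1], and by the
  Weierstrass approximation theorem V would give every interval [s, t] mass at most t - s. But V lies
  in [a, a + c] whenever X_0 = x, so q(x) <= c = p(x) for every x, which forces p = q.
*)

lemma abs_integral_unit_interval_le:
  fixes h :: "real \<Rightarrow> real"
  assumes "continuous_on UNIV h" "\<And>x. x \<in> {0..1} \<Longrightarrow> \<bar>h x\<bar> \<le> e"
  shows "\<bar>\<integral>t. h t * indicator {0..1} t \<partial>lborel\<bar> \<le> e"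
proof -
  have "\<bar>\<integral>t. h t * indicator {0..1} t \<partial>lborel\<bar> \<le> (\<integral>t. e * indicator {0..1::real} t \<partial>lborel)"
  proof (rule integral_abs_bound_integral)
    show "integrable lborel (\<lambda>t. h t * indicator {0..1} t)"
      using assms(1) by (intro borel_integrable_atLeastAtMost) (simp add: continuous_on_eq_continuous_at)
    show "integrable lborel (\<lambda>t. e * indicator {0..1::real} t)"
      by (intro integrable_mult_right integrable_real_indicator) auto
  qed (use assms(2) in \<open>auto simp: indicator_def\<close>)
  then show ?thesis by simp
qed

context
  fixes \<mu> :: "real measure"
  assumes prob: "prob_space \<mu>" and sets_\<mu>: "sets \<mu> = sets borel"
    and supp: "AE x in \<mu>. x \<in> {0..1}"
begin

lemma integrable_continuous_unit_support:
  fixes h :: "real \<Rightarrow> real"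
  assumes "continuous_on UNIV h"
  shows "integrable \<mu> h"
proof -
  interpret prob_space \<mu> by (rule prob)
  obtain B where B: "\<And>x. x \<in> {0..1} \<Longrightarrow> norm (h x) \<le> B"
    using compact_imp_bounded[OF compact_continuous_image[OF continuous_on_subset[OF assms] compact_Icc]]
    by (fastforce simp: bounded_iff)
  have "AE x in \<mu>. norm (h x) \<le> B"
    using supp by eventually_elim (rule B)
  moreover have "h \<in> borel_measurable \<mu>"
    using borel_measurable_continuous_onI[OF assms] by (simp add: measurable_cong_sets[OF sets_\<mu> refl])
  ultimately show ?thesis
    by (rule integrable_const_bound)
qed

lemma abs_integral_le_unit_support:
  fixes h :: "real \<Rightarrow> real"
  assumes "continuous_on UNIV h" "\<And>x. x \<in> {0..1} \<Longrightarrow> \<bar>h x\<bar> \<le> e"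
  shows "\<bar>\<integral>x. h x \<partial>\<mu>\<bar> \<le> e"
proof -
  interpret prob_space \<mu> by (rule prob)
  have "AE x in \<mu>. \<bar>h x\<bar> \<le> e"
    using supp by eventually_elim (rule assms(2))
  then have "- e \<le> (\<integral>x. h x \<partial>\<mu>)" "(\<integral>x. h x \<partial>\<mu>) \<le> e"
    using integrable_continuous_unit_support[OF assms(1)]
    by (auto intro!: integral_ge_const integral_le_const)
  then show ?thesis by linarith
qed

lemma integral_poly_eq_if_uniform_moments:
  assumes moments: "\<And>n. (\<integral>x. x ^ n \<partial>\<mu>) = 1 / (real n + 1)"
  shows "(\<integral>x. (\<Sum>i\<le>n. a i * x ^ i) \<partial>\<mu>) = (\<integral>t. (\<Sum>i\<le>n. a i * t ^ i) * indicator {0..1} t \<partial>lborel)"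
proof -
  have "(\<integral>x. (\<Sum>i\<le>n. a i * x ^ i) \<partial>\<mu>) = (\<Sum>i\<le>n. a i * (\<integral>t. t ^ i * indicator {0..1} t \<partial>lborel))"
    by (subst Bochner_Integration.integral_sum)
       (auto intro!: integrable_continuous_unit_support continuous_on_power continuous_on_id
         simp: moments integral_power add.commute)
  also have "\<dots> = (\<integral>t. (\<Sum>i\<le>n. a i * t ^ i) * indicator {0..1} t \<partial>lborel)"
    by (simp add: sum_distrib_right mult.assoc borel_integrable_atLeastAtMost)
  finally show ?thesis .
qed

lemma integral_continuous_eq_if_uniform_moments:
  fixes f :: "real \<Rightarrow> real"
  assumes moments: "\<And>n. (\<integral>x. x ^ n \<partial>\<mu>) = 1 / (real n + 1)"
    and f: "continuous_on UNIV f"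
  shows "(\<integral>x. f x \<partial>\<mu>) = (\<integral>t. f t * indicator {0..1} t \<partial>lborel)"
proof -
  have "\<bar>(\<integral>x. f x \<partial>\<mu>) - (\<integral>t. f t * indicator {0..1} t \<partial>lborel)\<bar> \<le> e" if "e > 0" for e
  proof -
    obtain g where "real_polynomial_function g" and g: "\<And>x. x \<in> {0..1} \<Longrightarrow> \<bar>f x - g x\<bar> < e / 2"
      using Stone_Weierstrass_real_polynomial_function[of "{0..1}" f "e / 2"] f \<open>e > 0\<close>
      by (auto intro: continuous_on_subset)
    then obtain a n where g_eq: "g = (\<lambda>x. \<Sum>i\<le>n. a i * x ^ i)"
      using real_polynomial_function_iff_sum by blast
    have g_cont: "continuous_on UNIV g"
      unfolding g_eq by (intro continuous_intros)
    have fg_cont: "continuous_on UNIV (\<lambda>x. f x - g x)"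
      using f g_cont by (intro continuous_intros)
    have fg_bound: "\<And>x. x \<in> {0..1} \<Longrightarrow> \<bar>f x - g x\<bar> \<le> e / 2"
      using g by (simp add: less_imp_le)
    have "(\<integral>x. f x - g x \<partial>\<mu>) = (\<integral>x. f x \<partial>\<mu>) - (\<integral>x. g x \<partial>\<mu>)"
      using f g_cont by (simp add: integrable_continuous_unit_support)
    moreover have "(\<integral>t. (f t - g t) * indicator {0..1} t \<partial>lborel)
        = (\<integral>t. f t * indicator {0..1} t \<partial>lborel) - (\<integral>t. g t * indicator {0..1} t \<partial>lborel)"
      using f g_cont
      by (simp add: left_diff_distrib borel_integrable_atLeastAtMost continuous_on_eq_continuous_at)
    moreover have "(\<integral>x. g x \<partial>\<mu>) = (\<integral>t. g t * indicator {0..1} t \<partial>lborel)"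
      unfolding g_eq by (rule integral_poly_eq_if_uniform_moments[OF moments])
    moreover have "\<bar>\<integral>x. f x - g x \<partial>\<mu>\<bar> \<le> e / 2"
      by (rule abs_integral_le_unit_support[OF fg_cont fg_bound])
    moreover have "\<bar>\<integral>t. (f t - g t) * indicator {0..1} t \<partial>lborel\<bar> \<le> e / 2"
      by (rule abs_integral_unit_interval_le[OF fg_cont fg_bound])
    ultimately show ?thesis by linarith
  qed
  then show ?thesis
    using dense_eq0_I[of "(\<integral>x. f x \<partial>\<mu>) - (\<integral>t. f t * indicator {0..1} t \<partial>lborel)"] by simp
qed

lemma measure_Icc_le_if_uniform_moments:
  assumes moments: "\<And>n. (\<integral>x. x ^ n \<partial>\<mu>) = 1 / (real n + 1)"
    and "a \<le> b"
  shows "measure \<mu> {a..b} \<le> b - a"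
proof (rule field_le_epsilon)
  fix e :: real
  assume "e > 0"
  interpret prob_space \<mu> by (rule prob)
  define d where "d = e / 2"
  have "d > 0" using \<open>e > 0\<close> by (simp add: d_def)
  \<comment> \<open>a continuous majorant of the indicator of [a, b] that vanishes outside [a - d, b + d]\<close>
  define f where "f t = max 0 (min 1 (min ((t - a) / d + 1) ((b - t) / d + 1)))" for t
  have f_cont: "continuous_on UNIV f"
    unfolding f_def by (intro continuous_intros) (use \<open>d > 0\<close> in auto)
  have f_01: "0 \<le> f t" "f t \<le> 1" for t
    by (auto simp: f_def)
  have "measure \<mu> {a..b} = (\<integral>x. indicator {a..b} x \<partial>\<mu>)"
    using sets_\<mu> by simp
  also have "\<dots> \<le> (\<integral>x. f x \<partial>\<mu>)"
  proof (rule integral_mono)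
    show "integrable \<mu> (\<lambda>x. indicator {a..b} x :: real)"
      using sets_\<mu> by (intro integrable_real_indicator) (auto simp: less_top[symmetric])
    show "integrable \<mu> f"
      by (rule integrable_continuous_unit_support[OF f_cont])
    show "indicator {a..b} x \<le> f x" for x
      using \<open>d > 0\<close> f_01[of x] by (auto simp: indicator_def f_def field_simps)
  qed
  also have "\<dots> = (\<integral>t. f t * indicator {0..1} t \<partial>lborel)"
    by (rule integral_continuous_eq_if_uniform_moments[OF moments f_cont])
  also have "\<dots> \<le> (\<integral>t. indicator {a - d .. b + d} t \<partial>lborel)"
  proof (rule integral_mono)
    show "integrable lborel (\<lambda>t. f t * indicator {0..1} t)"
      using f_cont by (intro borel_integrable_atLeastAtMost) (simp add: continuous_on_eq_continuous_at)
    show "integrable lborel (\<lambda>t. indicator {a - d .. b + d} t :: real)"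
      by (intro integrable_real_indicator) (auto simp: emeasure_lborel_Icc_eq)
    show "f t * indicator {0..1} t \<le> indicator {a - d .. b + d} t" for t
    proof (cases "t \<in> {a - d .. b + d}")
      case False
      then have "(t - a) / d + 1 < 0 \<or> (b - t) / d + 1 < 0"
        using \<open>d > 0\<close> by (auto simp: field_simps)
      then have "f t = 0"
        by (auto simp: f_def)
      then show ?thesis by simp
    qed (use f_01[of t] in \<open>auto simp: indicator_def\<close>)
  qed
  also have "\<dots> = b - a + e"
    using \<open>a \<le> b\<close> \<open>d > 0\<close> by (simp add: d_def)
  finally show "measure \<mu> {a..b} \<le> b - a + e" .
qed

end

lemma pmf_le_imp_eq:
  fixes p q :: "'a pmf"
  assumes le: "\<And>x. pmf q x \<le> pmf p x"
  shows "p = q"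
proof (rule pmf_eqI, rule ccontr)
  fix x
  assume "pmf p x \<noteq> pmf q x"
  with le have less: "pmf q x < pmf p x"
    by (simp add: order_less_le)
  have "emeasure (measure_pmf q) (- {x}) \<le> emeasure (measure_pmf p) (- {x})"
    unfolding nn_integral_pmf[symmetric] using le by (intro nn_integral_mono) auto
  then have "measure q (- {x}) \<le> measure p (- {x})"
    by (simp add: measure_pmf.emeasure_eq_measure)
  then show False
    using less measure_pmf.prob_compl[of "{x}"] by (simp add: Compl_eq_Diff_UNIV measure_pmf_single)
qed

lemma measure_lt_plus_pmf_le_1:
  fixes p :: "'a pmf"
  assumes "irreflp lt"
  shows "measure p {y. lt y x} + pmf p x \<le> 1"
proof -
  have "measure p ({y. lt y x} \<union> {x}) = measure p {y. lt y x} + pmf p x"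
    using assms by (subst measure_pmf.finite_measure_Union) (auto simp: measure_pmf_single irreflp_def)
  then show ?thesis
    using measure_pmf.prob_le_1 by metis
qed

definition ranks_below :: "('a \<Rightarrow> 'a \<Rightarrow> bool) \<Rightarrow> 'a \<Rightarrow> real \<Rightarrow> 'a \<Rightarrow> real \<Rightarrow> bool" where
  "ranks_below lt y v x w \<longleftrightarrow> lt y x \<or> (y = x \<and> v < w)"

definition randomized_cdf :: "('a \<Rightarrow> 'a \<Rightarrow> bool) \<Rightarrow> 'a pmf \<Rightarrow> 'a \<Rightarrow> real \<Rightarrow> real" where
  "randomized_cdf lt p x w = measure p {y. lt y x} + pmf p x * w"

abbreviation uniform01 :: "real measure" where
  "uniform01 \<equiv> uniform_measure lborel {0<..<1}"

lemma prob_space_uniform01: "prob_space uniform01"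
  by (intro prob_space_uniform_measure) auto

lemma randomized_cdf_bounds:
  fixes p :: "'a pmf"
  assumes "0 \<le> w" "w \<le> 1"
  shows "measure p {y. lt y x} \<le> randomized_cdf lt p x w"
    and "randomized_cdf lt p x w \<le> measure p {y. lt y x} + pmf p x"
  using assms mult_left_le[of w "pmf p x"] by (auto simp: randomized_cdf_def)

lemma rank_stat_eq_card:
  assumes irrefl: "irreflp lt"
  shows "rank_stat lt M (x0, xs, us) = card {j \<in> {1..M}. ranks_below lt (xs j) (us j) x0 (us 0)}"
proof -
  have "of_bool (lt (xs j) x0) + of_bool (xs j = x0 \<and> us j < us 0)
      = (of_bool (ranks_below lt (xs j) (us j) x0 (us 0)) :: nat)" for j
    using irrefl by (auto simp: ranks_below_def irreflp_def)
  then show ?thesis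
    by (simp add: rank_stat_def Int_def)
qed

lemma rank_stat_eq_top_iff:
  assumes "irreflp lt"
  shows "rank_stat lt M (x0, xs, us) = M \<longleftrightarrow> (\<forall>j\<in>{1..M}. ranks_below lt (xs j) (us j) x0 (us 0))"
proof -
  let ?S = "{j \<in> {1..M}. ranks_below lt (xs j) (us j) x0 (us 0)}"
  have "card ?S = M \<longleftrightarrow> ?S = {1..M}"
  proof
    show "card ?S = M \<Longrightarrow> ?S = {1..M}"
      by (rule card_subset_eq) auto
  qed simp
  then show ?thesis
    by (auto simp: rank_stat_eq_card[OF assms])
qed

lemma emeasure_ranks_below:
  assumes irrefl: "irreflp lt"
  shows "emeasure (measure_pmf p) {y. ranks_below lt y v x w}
    = ennreal (measure p {y. lt y x}) + ennreal (pmf p x) * of_bool (v < w)"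
proof (cases "v < w")
  case True
  then have "{y. ranks_below lt y v x w} = {y. lt y x} \<union> {x}"
    by (auto simp: ranks_below_def)
  moreover have "emeasure (measure_pmf p) ({y. lt y x} \<union> {x})
      = emeasure (measure_pmf p) {y. lt y x} + emeasure (measure_pmf p) {x}"
    using irrefl by (intro plus_emeasure[symmetric]) (auto simp: irreflp_def)
  ultimately show ?thesis
    using True by (simp add: measure_pmf.emeasure_eq_measure measure_pmf_single)
next
  case False
  then show ?thesis
    by (simp add: ranks_below_def measure_pmf.emeasure_eq_measure)
qed

lemma nn_integral_emeasure_ranks_below:
  assumes irrefl: "irreflp lt" and w: "w \<in> {0<..<1}"
  shows "(\<integral>\<^sup>+v. emeasure (measure_pmf p) {y. ranks_below lt y v x w} \<partial>uniform01)
    = ennreal (randomized_cdf lt p x w)"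
proof -
  interpret prob_space uniform01 by (rule prob_space_uniform01)
  have "emeasure uniform01 {..<w} = ennreal w"
  proof -
    have "{0<..<1::real} \<inter> {..<w} = {0<..<w}" using w by auto
    then show ?thesis using w by (simp add: divide_ennreal_def)
  qed
  have "(\<integral>\<^sup>+v. emeasure (measure_pmf p) {y. ranks_below lt y v x w} \<partial>uniform01)
      = (\<integral>\<^sup>+v. ennreal (measure p {y. lt y x}) + ennreal (pmf p x) * indicator {..<w} v \<partial>uniform01)"
    by (intro nn_integral_cong) (simp add: emeasure_ranks_below[OF irrefl] indicator_def)
  also have "\<dots> = ennreal (measure p {y. lt y x}) + ennreal (pmf p x) * ennreal w"
    using \<open>emeasure uniform01 {..<w} = ennreal w\<close>
    by (simp add: nn_integral_add nn_integral_cmult_indicator emeasure_space_1)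
  also have "\<dots> = ennreal (randomized_cdf lt p x w)"
    using w by (simp add: randomized_cdf_def ennreal_mult)
  finally show ?thesis .
qed

lemma nn_integral_PiM_prod_pivot:
  fixes N :: "'b measure" and g :: "'b \<Rightarrow> 'b \<Rightarrow> ennreal"
  assumes N: "sigma_finite_measure N"
    and g[measurable]: "case_prod g \<in> borel_measurable (N \<Otimes>\<^sub>M N)"
  shows "(\<integral>\<^sup>+u. (\<Prod>j\<in>{1..M}. g (u j) (u 0)) \<partial>PiM {0..M} (\<lambda>_. N))
    = (\<integral>\<^sup>+w. (\<integral>\<^sup>+v. g v w \<partial>N) ^ M \<partial>N)"
proof -
  interpret product_sigma_finite "\<lambda>_::nat. N"
    using N by (simp add: product_sigma_finite_def)
  have "{0..M} = insert 0 {1..M}" by auto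
  moreover have "(\<lambda>u. \<Prod>j\<in>{1..M}. g (u j) (u 0)) \<in> borel_measurable (PiM (insert 0 {1..M}) (\<lambda>_. N))"
    by measurable
  ultimately have "(\<integral>\<^sup>+u. (\<Prod>j\<in>{1..M}. g (u j) (u 0)) \<partial>PiM {0..M} (\<lambda>_. N))
      = (\<integral>\<^sup>+w. \<integral>\<^sup>+u. (\<Prod>j\<in>{1..M}. g ((u(0 := w)) j) w) \<partial>PiM {1..M} (\<lambda>_. N) \<partial>N)"
    by (simp add: product_nn_integral_insert_rev)
  also have "\<dots> = (\<integral>\<^sup>+w. \<integral>\<^sup>+u. (\<Prod>j\<in>{1..M}. g (u j) w) \<partial>PiM {1..M} (\<lambda>_. N) \<partial>N)"
    by (intro nn_integral_cong prod.cong) auto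
  also have "\<dots> = (\<integral>\<^sup>+w. (\<integral>\<^sup>+v. g v w \<partial>N) ^ M \<partial>N)"
  proof (intro nn_integral_cong)
    fix w assume "w \<in> space N"
    then have "(\<lambda>v. g v w) \<in> borel_measurable N"
      using measurable_comp[OF measurable_Pair2' g] by simp
    then show "(\<integral>\<^sup>+u. (\<Prod>j\<in>{1..M}. g (u j) w) \<partial>PiM {1..M} (\<lambda>_. N)) = (\<integral>\<^sup>+v. g v w \<partial>N) ^ M"
      using product_nn_integral_prod[of "{1..M}" "\<lambda>_ v. g v w"] by simp
  qed
  finally show ?thesis .
qed

lemma nn_integral_power_emeasure_ranks_below:
  assumes irrefl: "irreflp lt"
  shows "(\<integral>\<^sup>+w. (\<integral>\<^sup>+v. emeasure (measure_pmf p) {y. ranks_below lt y v x w} \<partial>uniform01) ^ M \<partial>uniform01)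
    = (\<integral>\<^sup>+w. ennreal (randomized_cdf lt p x w ^ M) \<partial>uniform01)"
proof (rule nn_integral_cong_AE)
  have "AE w in uniform01. w \<in> {0<..<1}"
    by (rule AE_uniform_measureI) auto
  then show "AE w in uniform01.
      (\<integral>\<^sup>+v. emeasure (measure_pmf p) {y. ranks_below lt y v x w} \<partial>uniform01) ^ M
        = ennreal (randomized_cdf lt p x w ^ M)"
  proof eventually_elim
    case (elim w)
    then have "0 \<le> randomized_cdf lt p x w"
      by (simp add: randomized_cdf_def)
    then show ?case
      by (simp add: nn_integral_emeasure_ranks_below[OF irrefl elim] ennreal_power)
  qed
qed

lemma emeasure_all_ranks_below:
  fixes lt :: "'a::countable \<Rightarrow> 'a \<Rightarrow> bool" and p :: "'a pmf" and M :: nat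
  assumes irrefl: "irreflp lt"
  defines "XU \<equiv> PiM {1..M} (\<lambda>_. measure_pmf p) \<Otimes>\<^sub>M PiM {0..M} (\<lambda>_. uniform01)"
  shows "emeasure XU {z \<in> space XU. \<forall>j\<in>{1..M}. ranks_below lt (fst z j) (snd z j) x (snd z 0)}
    = (\<integral>\<^sup>+w. ennreal (randomized_cdf lt p x w ^ M) \<partial>uniform01)"
proof -
  let ?P = "PiM {1..M} (\<lambda>_. measure_pmf p)" and ?UU = "PiM {0..M} (\<lambda>_. uniform01)"
  let ?A = "{z \<in> space XU. \<forall>j\<in>{1..M}. ranks_below lt (fst z j) (snd z j) x (snd z 0)}"
  define g where "g v w = emeasure (measure_pmf p) {y. ranks_below lt y v x w}" for v w
  interpret U: prob_space uniform01 by (rule prob_space_uniform01)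
  interpret PU: product_prob_space "\<lambda>_::nat. uniform01" UNIV by unfold_locales
  interpret PP: product_prob_space "\<lambda>_::nat. measure_pmf p" UNIV by unfold_locales
  interpret XU: pair_sigma_finite ?P ?UU
    by (intro pair_sigma_finite.intro prob_space_imp_sigma_finite prob_space_PiM
        prob_space_measure_pmf prob_space_uniform01)
  have "?A \<in> sets XU"
    unfolding XU_def ranks_below_def by measurable
  then have "emeasure XU ?A = (\<integral>\<^sup>+us. emeasure ?P ((\<lambda>xs. (xs, us)) -` ?A) \<partial>?UU)"
    unfolding XU_def by (rule XU.emeasure_pair_measure_alt2)
  also have "\<dots> = (\<integral>\<^sup>+us. (\<Prod>j\<in>{1..M}. g (us j) (us 0)) \<partial>?UU)"
  proof (rule nn_integral_cong)
    fix us assume "us \<in> space ?UU"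
    then have "(\<lambda>xs. (xs, us)) -` ?A = (\<Pi>\<^sub>E j\<in>{1..M}. {y. ranks_below lt y (us j) x (us 0)})"
      by (auto simp: XU_def space_pair_measure space_PiM PiE_def Pi_def)
    then show "emeasure ?P ((\<lambda>xs. (xs, us)) -` ?A) = (\<Prod>j\<in>{1..M}. g (us j) (us 0))"
      by (simp add: PP.emeasure_PiM g_def)
  qed
  also have "\<dots> = (\<integral>\<^sup>+w. (\<integral>\<^sup>+v. g v w \<partial>uniform01) ^ M \<partial>uniform01)"
  proof (rule nn_integral_PiM_prod_pivot)
    show "sigma_finite_measure uniform01"
      by (rule prob_space_imp_sigma_finite[OF prob_space_uniform01])
    show "case_prod g \<in> borel_measurable (uniform01 \<Otimes>\<^sub>M uniform01)"
      unfolding g_def emeasure_ranks_below[OF irrefl] by measurable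
  qed
  also have "\<dots> = (\<integral>\<^sup>+w. ennreal (randomized_cdf lt p x w ^ M) \<partial>uniform01)"
    unfolding g_def by (rule nn_integral_power_emeasure_ranks_below[OF irrefl])
  finally show ?thesis .
qed

lemma emeasure_rank_stat_eq_top:
  fixes lt :: "'a::countable \<Rightarrow> 'a \<Rightarrow> bool"
  assumes irrefl: "irreflp lt"
  shows "emeasure (rank_space p q M) {\<omega> \<in> space (rank_space p q M). rank_stat lt M \<omega> = M}
    = (\<integral>\<^sup>+x. \<integral>\<^sup>+w. ennreal (randomized_cdf lt p x w ^ M) \<partial>uniform01 \<partial>measure_pmf q)"
proof -
  let ?XU = "PiM {1..M} (\<lambda>_. measure_pmf p) \<Otimes>\<^sub>M PiM {0..M} (\<lambda>_. uniform01)"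
  let ?E = "{\<omega> \<in> space (rank_space p q M). rank_stat lt M \<omega> = M}"
  interpret XU: sigma_finite_measure ?XU
    by (intro prob_space_imp_sigma_finite prob_space_pair prob_space_PiM prob_space_measure_pmf
        prob_space_uniform01)
  have "?E \<in> sets (rank_space p q M)"
    unfolding rank_space_def rank_stat_def by measurable
  then have "emeasure (rank_space p q M) ?E = (\<integral>\<^sup>+x. emeasure ?XU (Pair x -` ?E) \<partial>measure_pmf q)"
    unfolding rank_space_def by (rule XU.emeasure_pair_measure_alt)
  also have "\<dots> = (\<integral>\<^sup>+x. emeasure ?XU
      {z \<in> space ?XU. \<forall>j\<in>{1..M}. ranks_below lt (fst z j) (snd z j) x (snd z 0)} \<partial>measure_pmf q)"
    by (intro nn_integral_cong arg_cong2[where f=emeasure] refl)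
       (auto simp: rank_space_def space_pair_measure rank_stat_eq_top_iff[OF irrefl])
  also have "\<dots> = (\<integral>\<^sup>+x. \<integral>\<^sup>+w. ennreal (randomized_cdf lt p x w ^ M) \<partial>uniform01 \<partial>measure_pmf q)"
    by (rule nn_integral_cong) (rule emeasure_all_ranks_below[OF irrefl])
  finally show ?thesis .
qed

definition randomized_pit_law :: "('a \<Rightarrow> 'a \<Rightarrow> bool) \<Rightarrow> 'a pmf \<Rightarrow> 'a pmf \<Rightarrow> real measure" where
  "randomized_pit_law lt p q =
     distr (measure_pmf q \<Otimes>\<^sub>M uniform01) borel (\<lambda>(x, w). randomized_cdf lt p x w)"

lemma measurable_randomized_cdf [measurable]:
  "(\<lambda>(x, w). randomized_cdf lt p x w) \<in> borel_measurable (measure_pmf q \<Otimes>\<^sub>M uniform01)"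
proof -
  have [measurable]: "f \<in> borel_measurable (measure_pmf q)" for f :: "_ \<Rightarrow> real"
    by simp
  show ?thesis
    unfolding randomized_cdf_def by measurable
qed

lemma prob_space_randomized_pit_law: "prob_space (randomized_pit_law lt p q)"
  unfolding randomized_pit_law_def
  by (intro prob_space.prob_space_distr prob_space_pair prob_space_measure_pmf prob_space_uniform01)
     measurable

lemma sets_randomized_pit_law [simp]: "sets (randomized_pit_law lt p q) = sets borel"
  by (simp add: randomized_pit_law_def)

lemma AE_randomized_cdf_unit_interval:
  assumes "irreflp lt"
  shows "AE z in measure_pmf q \<Otimes>\<^sub>M uniform01. randomized_cdf lt p (fst z) (snd z) \<in> {0..1}"
proof -
  interpret pair_sigma_finite "measure_pmf q" uniform01
    by (intro pair_sigma_finite.intro prob_space_imp_sigma_finite prob_space_measure_pmf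
        prob_space_uniform01)
  have "AE z in measure_pmf q \<Otimes>\<^sub>M uniform01. snd z \<in> {0<..<1}"
    by (rule AE_pair_measure) (auto intro: AE_uniform_measureI)
  then show ?thesis
  proof eventually_elim
    case (elim z)
    then show ?case
      using randomized_cdf_bounds[where w="snd z" and p=p and lt=lt and x="fst z"]
        measure_lt_plus_pmf_le_1[OF assms, where p=p and x="fst z"]
        measure_nonneg[of "measure_pmf p" "{y. lt y (fst z)}"]
      unfolding atLeastAtMost_iff greaterThanLessThan_iff by linarith
  qed
qed

lemma AE_randomized_pit_law_unit_interval:
  assumes "irreflp lt"
  shows "AE t in randomized_pit_law lt p q. t \<in> {0..1}"
  unfolding randomized_pit_law_def
  by (subst AE_distr_iff) (use AE_randomized_cdf_unit_interval[OF assms] in \<open>auto simp: case_prod_beta\<close>)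

lemma integral_power_randomized_pit_law:
  fixes lt :: "'a::countable \<Rightarrow> 'a \<Rightarrow> bool"
  assumes irrefl: "irreflp lt"
  shows "(\<integral>t. t ^ M \<partial>randomized_pit_law lt p q)
    = measure (rank_space p q M) {\<omega> \<in> space (rank_space p q M). rank_stat lt M \<omega> = M}"
proof -
  let ?V = "\<lambda>z. randomized_cdf lt p (fst z) (snd z)"
  interpret U: sigma_finite_measure uniform01
    by (rule prob_space_imp_sigma_finite[OF prob_space_uniform01])
  have "(\<integral>t. t ^ M \<partial>randomized_pit_law lt p q) = (\<integral>z. ?V z ^ M \<partial>(measure_pmf q \<Otimes>\<^sub>M uniform01))"
    unfolding randomized_pit_law_def by (simp add: integral_distr case_prod_beta)
  also have "\<dots> = enn2real (\<integral>\<^sup>+z. ennreal (?V z ^ M) \<partial>(measure_pmf q \<Otimes>\<^sub>M uniform01))"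
  proof (rule integral_eq_nn_integral)
    show "AE z in measure_pmf q \<Otimes>\<^sub>M uniform01. 0 \<le> ?V z ^ M"
      using AE_randomized_cdf_unit_interval[OF irrefl, where p=p and q=q] by eventually_elim simp
  qed (simp add: randomized_cdf_def)
  also have "(\<integral>\<^sup>+z. ennreal (?V z ^ M) \<partial>(measure_pmf q \<Otimes>\<^sub>M uniform01))
      = (\<integral>\<^sup>+x. \<integral>\<^sup>+w. ennreal (randomized_cdf lt p x w ^ M) \<partial>uniform01 \<partial>measure_pmf q)"
    using U.nn_integral_fst[of "\<lambda>z. ennreal (?V z ^ M)" "measure_pmf q"]
    by (simp add: randomized_cdf_def)
  finally show ?thesis
    by (simp add: emeasure_rank_stat_eq_top[OF irrefl] measure_def)
qed

lemma pmf_le_measure_randomized_pit_law: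
  fixes p q :: "'a pmf"
  assumes "irreflp lt"
  shows "pmf q x \<le> measure (randomized_pit_law lt p q) {measure p {y. lt y x} .. measure p {y. lt y x} + pmf p x}"
proof -
  let ?N = "measure_pmf q \<Otimes>\<^sub>M uniform01" and ?I = "{measure p {y. lt y x} .. measure p {y. lt y x} + pmf p x}"
  interpret U: prob_space uniform01 by (rule prob_space_uniform01)
  interpret N: prob_space ?N
    by (intro prob_space_pair prob_space_measure_pmf prob_space_uniform01)
  have "pmf q x = measure ?N ({x} \<times> {0<..<1})"
    using U.emeasure_pair_measure_Times[of "{x}" "measure_pmf q" "{0<..<1}"]
    by (simp add: N.emeasure_eq_measure emeasure_pmf_single U.emeasure_eq_measure measure_nonneg)
  also have "\<dots> \<le> measure ?N ((\<lambda>(x, w). randomized_cdf lt p x w) -` ?I \<inter> space ?N)"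
  proof (rule N.finite_measure_mono)
    show "{x} \<times> {0<..<1} \<subseteq> (\<lambda>(x, w). randomized_cdf lt p x w) -` ?I \<inter> space ?N"
      using randomized_cdf_bounds[where p=p and lt=lt and x=x] by (auto simp: space_pair_measure)
  qed measurable
  finally show ?thesis
    unfolding randomized_pit_law_def by (simp add: measure_distr)
qed

lemma eq_if_randomized_pit_law_uniform_moments:
  fixes p q :: "'a pmf"
  assumes irrefl: "irreflp lt"
    and moments: "\<And>n. (\<integral>t. t ^ n \<partial>randomized_pit_law lt p q) = 1 / (real n + 1)"
  shows "p = q"
proof (rule pmf_le_imp_eq)
  fix x
  let ?a = "measure p {y. lt y x}"
  have "pmf q x \<le> measure (randomized_pit_law lt p q) {?a .. ?a + pmf p x}"
    by (rule pmf_le_measure_randomized_pit_law[OF irrefl])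
  also have "\<dots> \<le> pmf p x"
    using measure_Icc_le_if_uniform_moments[OF prob_space_randomized_pit_law sets_randomized_pit_law
        AE_randomized_pit_law_unit_interval[OF irrefl] moments, of ?a "?a + pmf p x"]
    by simp
  finally show "pmf q x \<le> pmf p x" .
qed

theorem corollary3p3:
  fixes lt :: "'a::countable \<Rightarrow> 'a \<Rightarrow> bool" and p q :: "'a pmf"
  assumes irrefl: "\<forall>x. \<not> lt x x"
    and trans: "\<forall>x y z. lt x y \<longrightarrow> lt y z \<longrightarrow> lt x z"
    and total: "\<forall>x y. x \<noteq> y \<longrightarrow> lt x y \<or> lt y x"
    and pq: "p \<noteq> q"
  shows "\<exists>M\<ge>1. \<not> (\<forall>k\<in>{0..M}.
            measure (rank_space p q M) {\<omega> \<in> space (rank_space p q M). rank_stat lt M \<omega> = k}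
              = 1 / real (M + 1))"
proof (rule ccontr)
  assume "\<not> ?thesis"
  then have top: "measure (rank_space p q M) {\<omega> \<in> space (rank_space p q M). rank_stat lt M \<omega> = M}
      = 1 / real (M + 1)" if "M \<ge> 1" for M
    using that by auto
  have "irreflp lt"
    using irrefl by (simp add: irreflp_def)
  have "(\<integral>t. t ^ n \<partial>randomized_pit_law lt p q) = 1 / (real n + 1)" for n
  proof (cases "n = 0")
    case True
    then show ?thesis
      using prob_space.prob_space[OF prob_space_randomized_pit_law] by simp
  next
    case False
    then show ?thesis
      using top[of n] by (simp add: integral_power_randomized_pit_law[OF \<open>irreflp lt\<close>] add.commute)
  qed
  then have "p = q"
    by (rule eq_if_randomized_pit_law_uniform_moments[OF \<open>irreflp lt\<close>])
  with pq show False ..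
qed

end
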